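(* Let $A=T_n\langle S;T\rangle$ be a Boolean Toeplitz matrix, with $S,T$ nonempty subsets of $\{1,\dots,n-1\}$, such that $\max S+\min T\le n$ and $\min S+\max T\le n$. Then there exists a positive integer $M$ such that for every integer $m>M$, the Boolean power $A^m$ is a Toeplitz matrix.
   Context: Boolean arithmetic on $\{0,1\}$: $1+1=1$. $T_n\langle S;T\rangle$ is the $n\times n$ $(0,1)$-matrix whose $(i,j)$-entry is $1$ iff $j-i\in S$ or $i-j\in T$. A matrix $(c_{ij})$ is Toeplitz if $c_{ij}$ depends only on $j-i$. *)

theory Defs
  imports Main
begin

text \<open>n x n Boolean matrices, indices 0..n-1 (shifted from the paper's 1..n;
  differences j - i are unchanged), represented as nat => nat => bool.\<close>

definition toep :: "nat \<Rightarrow> nat set \<Rightarrow> nat set \<Rightarrow> nat \<Rightarrow> nat \<Rightarrow> bool" where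
  "toep n S T i j = ((i \<le> j \<and> j - i \<in> S) \<or> (j \<le> i \<and> i - j \<in> T))"

definition bmult :: "nat \<Rightarrow> (nat \<Rightarrow> nat \<Rightarrow> bool) \<Rightarrow> (nat \<Rightarrow> nat \<Rightarrow> bool) \<Rightarrow> nat \<Rightarrow> nat \<Rightarrow> bool" where
  "bmult n A B i j = (\<exists>k<n. A i k \<and> B k j)"

fun bpow :: "nat \<Rightarrow> (nat \<Rightarrow> nat \<Rightarrow> bool) \<Rightarrow> nat \<Rightarrow> nat \<Rightarrow> nat \<Rightarrow> bool" where
  "bpow n A 0 = (\<lambda>i j. i = j)"
| "bpow n A (Suc m) = bmult n (bpow n A m) A"

definition is_toeplitz :: "nat \<Rightarrow> (nat \<Rightarrow> nat \<Rightarrow> bool) \<Rightarrow> bool" where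
  "is_toeplitz n C = (\<forall>i j i' j'. i < n \<and> j < n \<and> i' < n \<and> j' < n \<and>
      int j - int i = int j' - int i' \<longrightarrow> C i j = C i' j')"

end

theory Submission
  imports Defs
begin

text \<open>The Boolean power \<open>A\<^sup>m i j\<close> holds iff some walk of \<open>m\<close> steps from \<open>i\<close> to \<open>j\<close> inside
  \<open>{0..n-1}\<close> uses only steps \<open>+s\<close> (\<open>s \<in> S\<close>) and \<open>-t\<close> (\<open>t \<in> T\<close>); so \<open>A\<^sup>m i j\<close> implies that
  \<open>j - i\<close> is a sum of \<open>m\<close> such steps. Conversely, let \<open>a = min S\<close> and \<open>b = min T\<close>. Trading a
  step \<open>+a\<close> for a step \<open>-b\<close> shifts the displacement by \<open>a + b\<close> and keeps the length, so only
  the multiplicities of the steps modulo \<open>a + b\<close> matter: any sequence of \<open>m\<close> steps has the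
  displacement of a bounded list of steps padded with many steps \<open>+a\<close> and \<open>-b\<close>. With enough
  padding, such a list is realised by a walk between any two points: \<open>a + b \<le> n\<close> lets the padding steps
  connect any two points, every \<open>+s\<close> fits after descending to \<open>x mod b\<close> (as \<open>s + b \<le> n\<close>), and
  every \<open>-t\<close> fits after ascending to the top \<open>a\<close> positions (as \<open>a + t \<le> n\<close>). Hence for
  large \<open>m\<close>, \<open>A\<^sup>m i j\<close> holds iff \<open>j - i\<close> is a sum of \<open>m\<close> steps, which depends on \<open>j - i\<close> only.\<close>

lemma bpow_add:
  assumes "bpow n A p i k" "k < n" "bpow n A q k j"
  shows "bpow n A (p + q) i j"
  using assms(3)
proof (induction q arbitrary: j)
  case 0
  then show ?case using assms(1) by simp
next
  case (Suc q)
  then obtain l where "l < n" "bpow n A q k l" "A l j"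
    by (auto simp: bmult_def)
  with Suc.IH show ?case by (auto simp: bmult_def)
qed

lemma bpow_Suc_left:
  assumes "i < n" "A i k" "k < n" "bpow n A m k j"
  shows "bpow n A (Suc m) i j"
  using bpow_add[of n A 1 i k m j] assms by (simp add: bmult_def)

lemma sum_list_map_removeAll:
  fixes f :: "'a \<Rightarrow> 'b::comm_ring_1"
  shows "sum_list (map f xs) = sum_list (map f (removeAll x xs)) + of_nat (count_list xs x) * f x"
  by (induction xs) (auto simp: algebra_simps)

lemma count_list_removeAll:
  "count_list (removeAll x xs) y = (if x = y then 0 else count_list xs y)"
  by (induction xs) auto

lemma sum_list_map_reduce_counts:
  fixes f :: "'a \<Rightarrow> int"
  assumes "0 < h"
  shows "\<exists>ys Q. set ys \<subseteq> set xs \<and> (\<forall>x. count_list ys x < h) \<and>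
    sum_list (map f xs) = sum_list (map f ys) + int h * Q"
proof (induction xs)
  case Nil
  show ?case using assms by (intro exI[of _ "[]"] exI[of _ 0]) simp
next
  case (Cons x xs)
  then obtain ys Q where ys: "set ys \<subseteq> set xs" "\<forall>x. count_list ys x < h"
    and sum: "sum_list (map f xs) = sum_list (map f ys) + int h * Q"
    by blast
  show ?case
  proof (cases "Suc (count_list ys x) < h")
    case True
    with ys sum show ?thesis by (intro exI[of _ "x # ys"] exI[of _ Q]) auto
  next
    case False
    with ys have "Suc (count_list ys x) = h" using Suc_leI le_antisym not_less by blast
    then have "int h = int (count_list ys x) + 1" by simp
    then have "sum_list (map f (x # xs)) = sum_list (map f (removeAll x ys)) + int h * (Q + f x)"
      using sum sum_list_map_removeAll[of f ys x] by (simp add: algebra_simps)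
    with ys assms show ?thesis
      by (intro exI[of _ "removeAll x ys"] exI[of _ "Q + f x"]) (auto simp: count_list_removeAll)
  qed
qed

lemma length_le_if_count_list_le:
  assumes "set xs \<subseteq> X" "finite X" "\<And>x. count_list xs x \<le> c"
  shows "length xs \<le> c * card X"
proof -
  have "length xs = (\<Sum>x\<in>X. count_list xs x)" using sum_count_set assms(1,2) by metis
  also have "\<dots> \<le> (\<Sum>x\<in>X. c)" using assms(3) by (intro sum_mono)
  finally show ?thesis by (simp add: mult.commute)
qed

lemma abs_sum_list_le:
  fixes xs :: "int list"
  assumes "\<And>x. x \<in> set xs \<Longrightarrow> \<bar>x\<bar> \<le> c"
  shows "\<bar>sum_list xs\<bar> \<le> c * int (length xs)"
  using assms
proof (induction xs)
  case (Cons x xs)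
  then have "\<bar>x\<bar> \<le> c" "\<bar>sum_list xs\<bar> \<le> c * int (length xs)" by auto
  then show ?case by (simp add: algebra_simps)
qed simp

locale toeplitz_walk =
  fixes n :: nat and S T :: "nat set"
  assumes S_nonempty: "S \<noteq> {}" and T_nonempty: "T \<noteq> {}"
    and S_subset: "S \<subseteq> {1..n-1}" and T_subset: "T \<subseteq> {1..n-1}"
    and Max_S_Min_T: "Max S + Min T \<le> n" and Min_S_Max_T: "Min S + Max T \<le> n"
begin

abbreviation A :: "nat \<Rightarrow> nat \<Rightarrow> bool" where "A \<equiv> toep n S T"

definition a :: nat where "a = Min S"
definition b :: nat where "b = Min T"

definition steps :: "int set" where "steps = int ` S \<union> (\<lambda>t. - int t) ` T"

lemma finite_S: "finite S" and finite_T: "finite T"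
  using S_subset T_subset finite_subset by blast+

lemma finite_steps: "finite steps"
  using finite_S finite_T by (simp add: steps_def)

lemma a_in_S: "a \<in> S" and b_in_T: "b \<in> T"
  using finite_S finite_T S_nonempty T_nonempty by (simp_all add: a_def b_def)

lemma a_pos: "0 < a" and b_pos: "0 < b"
  using a_in_S b_in_T S_subset T_subset by force+

lemma S_add_b: "s \<in> S \<Longrightarrow> s + b \<le> n"
  using Max_S_Min_T Max_ge[OF finite_S] by (fastforce simp: b_def)

lemma a_add_T: "t \<in> T \<Longrightarrow> a + t \<le> n"
  using Min_S_Max_T Max_ge[OF finite_T] by (fastforce simp: a_def)

lemma a_add_b: "a + b \<le> n"
  using a_add_T b_in_T .

lemma abs_less_if_steps: "e \<in> steps \<Longrightarrow> \<bar>e\<bar> < int n"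
  using S_subset T_subset by (force simp: steps_def)

lemma toep_imp_steps: "A i j \<Longrightarrow> int j - int i \<in> steps"
  by (force simp: toep_def steps_def)

lemma bpow_imp_steps:
  "bpow n A m i j \<Longrightarrow> \<exists>L. length L = m \<and> set L \<subseteq> steps \<and> sum_list L = int j - int i"
proof (induction m arbitrary: j)
  case 0
  then show ?case by simp
next
  case (Suc m)
  then obtain k where "bpow n A m i k" "A k j"
    by (auto simp: bmult_def)
  moreover from Suc.IH[OF this(1)] obtain L
    where "length L = m" "set L \<subseteq> steps" "sum_list L = int k - int i"
    by blast
  ultimately show ?case
    using toep_imp_steps by (intro exI[of _ "L @ [int j - int k]"]) auto
qed

lemma bpow_up_down:
  assumes "x < n" "y < n" "int y = int x + int p * int a - int q * int b"
  shows "bpow n A (p + q) x y"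
  using assms
proof (induction "p + q" arbitrary: x p q)
  case 0
  then show ?case by simp
next
  case (Suc k)
  show ?case
  \<comment> \<open>Greedy: step down by \<open>b\<close> when one is still due and fits; otherwise stepping up by
    \<open>a\<close> fits, since then \<open>x < b\<close> and \<open>a + b \<le> n\<close>.\<close>
  proof (cases "0 < q \<and> b \<le> x")
    case True
    then have "int y = int (x - b) + int p * int a - int (q - 1) * int b"
      using Suc.prems(3) by (simp add: algebra_simps)
    then have "bpow n A (p + (q - 1)) (x - b) y"
      using Suc True by (intro Suc.hyps) auto
    moreover have "A x (x - b)"
      using True b_in_T by (simp add: toep_def)
    ultimately have "bpow n A (Suc (p + (q - 1))) x y"
      using bpow_Suc_left Suc.prems(1) by simp
    then show ?thesis using True by simp
  next
    case False
    have "0 < p \<and> x + a < n"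
    proof (cases "q = 0")
      case True
      then have "0 < p" using Suc.hyps(2) by simp
      then have "int a \<le> int p * int a" by (simp add: mult_le_cancel_right1)
      moreover have "int y = int x + int p * int a" using Suc.prems(3) True by simp
      ultimately show ?thesis using Suc.prems(2) \<open>0 < p\<close> by linarith
    next
      case False
      then have "int b \<le> int q * int b" by (simp add: mult_le_cancel_right1)
      have "x < b" using False \<open>\<not> (0 < q \<and> b \<le> x)\<close> by simp
      have "p \<noteq> 0"
      proof
        assume "p = 0"
        then have "int y = int x - int q * int b" using Suc.prems(3) by simp
        with \<open>int b \<le> int q * int b\<close> \<open>x < b\<close> show False by linarith
      qed
      then show ?thesis using \<open>x < b\<close> a_add_b by simp
    qed
    then have "int y = int (x + a) + int (p - 1) * int a - int q * int b"
      using Suc.prems(3) by (simp add: algebra_simps)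
    then have "bpow n A (p - 1 + q) (x + a) y"
      using Suc \<open>0 < p \<and> x + a < n\<close> by (intro Suc.hyps) auto
    moreover have "A x (x + a)"
      using a_in_S by (simp add: toep_def)
    moreover have "p + q = Suc (p - 1 + q)"
      using \<open>0 < p \<and> x + a < n\<close> by simp
    ultimately show ?thesis
      using bpow_Suc_left[OF Suc.prems(1)] \<open>0 < p \<and> x + a < n\<close> by metis
  qed
qed

lemma bpow_of_steps:
  assumes "set L \<subseteq> steps" "x < n" "y < n" "n * length L \<le> p" "n * length L \<le> q"
    and "int y = int x + sum_list L + int p * int a - int q * int b"
  shows "bpow n A (length L + p + q) x y"
  using assms
proof (induction L arbitrary: x p q)
  case Nil
  then show ?case using bpow_up_down by simp
next
  case (Cons e L)
  from Cons.prems(1) consider (up) s where "s \<in> S" "e = int s" | (down) t where "t \<in> T" "e = - int t"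
    unfolding steps_def by auto
  then show ?case
  proof cases
    case up
    define k where "k = x div b"
    define z where "z = x mod b"
    have x_eq: "x = z + k * b" by (simp add: k_def z_def)
    have "k < n" using Cons.prems(2) div_le_dividend le_less_trans unfolding k_def by blast
    have "z + s < n" using S_add_b[OF up(1)] mod_less_divisor[OF b_pos, of x] unfolding z_def by linarith
    have "bpow n A (0 + k) x z"
      using Cons.prems(2) by (intro bpow_up_down) (auto simp: x_eq)
    moreover have "bpow n A (Suc (length L + p + (q - k))) z y"
    proof (rule bpow_Suc_left)
      show "A z (z + s)" using up(1) by (simp add: toep_def)
      show "bpow n A (length L + p + (q - k)) (z + s) y"
        using Cons.prems \<open>k < n\<close> \<open>z + s < n\<close> up(2)
        by (intro Cons.IH) (auto simp: x_eq algebra_simps)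
    qed (use \<open>z + s < n\<close> in auto)
    ultimately have "bpow n A (k + Suc (length L + p + (q - k))) x y"
      using bpow_add \<open>z + s < n\<close> by fastforce
    moreover have "k \<le> q" using Cons.prems(5) \<open>k < n\<close> by simp
    ultimately show ?thesis by simp
  next
    case down
    define k where "k = (n - 1 - x) div a"
    define z where "z = x + k * a"
    have z_eq: "z + (n - 1 - x) mod a = n - 1"
      using Cons.prems(2) div_mult_mod_eq[of "n - 1 - x" a] by (simp add: z_def k_def)
    have "k < n" using Cons.prems(2) div_le_dividend[of "n - 1 - x" a] unfolding k_def by linarith
    have "z < n" "t \<le> z"
      using z_eq a_add_T[OF down(1)] mod_less_divisor[OF a_pos, of "n - 1 - x"] by linarith+
    have "bpow n A (k + 0) x z"
      using Cons.prems(2) \<open>z < n\<close> by (intro bpow_up_down) (auto simp: z_def)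
    moreover have "bpow n A (Suc (length L + (p - k) + q)) z y"
    proof (rule bpow_Suc_left)
      show "A z (z - t)" using down(1) \<open>t \<le> z\<close> by (simp add: toep_def)
      show "bpow n A (length L + (p - k) + q) (z - t) y"
        using Cons.prems \<open>k < n\<close> \<open>z < n\<close> \<open>t \<le> z\<close> down(2)
        by (intro Cons.IH) (auto simp: z_def algebra_simps)
    qed (use \<open>z < n\<close> in auto)
    ultimately have "bpow n A (k + Suc (length L + (p - k) + q)) x y"
      using bpow_add \<open>z < n\<close> by fastforce
    moreover have "k \<le> p" using Cons.prems(4) \<open>k < n\<close> by simp
    ultimately show ?thesis by simp
  qed
qed

definition short_bound :: nat where "short_bound = (a + b) * card steps"

lemma steps_reduce:
  assumes "set L \<subseteq> steps"
  shows "\<exists>L0 Q. set L0 \<subseteq> steps \<and> length L0 \<le> short_bound \<and>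
    sum_list L = sum_list L0 + (int (length L) - int (length L0)) * int a + int (a + b) * Q"
proof -
  obtain L0 Q where L0: "set L0 \<subseteq> set L" "\<forall>e. count_list L0 e < a + b"
    and sum: "sum_list (map (\<lambda>e. e - int a) L) = sum_list (map (\<lambda>e. e - int a) L0) + int (a + b) * Q"
    using sum_list_map_reduce_counts[where h = "a + b" and f = "\<lambda>e. e - int a" and xs = L] a_pos
    by auto
  have "length L0 \<le> short_bound"
    unfolding short_bound_def using L0 assms finite_steps
    by (intro length_le_if_count_list_le) (auto simp: less_imp_le)
  moreover have "sum_list L = sum_list L0 + (int (length L) - int (length L0)) * int a + int (a + b) * Q"
    using sum by (simp add: sum_list_subtractf sum_list_triv algebra_simps)
  ultimately show ?thesis using L0 assms by blast
qed

definition threshold :: nat where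
  "threshold = (n + 1) * (a + b) * short_bound + 2 * n * short_bound + n"

lemma threshold_pos: "0 < threshold"
  using a_in_S a_pos S_subset by (force simp: threshold_def)

lemma padding_large:
  assumes "i < n" "j < n" "threshold \<le> m" "set L0 \<subseteq> steps" "length L0 \<le> short_bound"
    and "int j - int i = sum_list L0 + (int m - int (length L0)) * int a - N * int (a + b)"
  shows "int n * int short_bound \<le> N" "int n * int short_bound \<le> int m - int (length L0) - N"
proof -
  define h where "h = int (a + b)"
  define K where "K = int short_bound"
  define l where "l = int (length L0)"
  define P where "P = int m - l - N"
  have sum_L0: "\<bar>sum_list L0\<bar> \<le> int n * l"
    using abs_sum_list_le[of L0 "int n"] abs_less_if_steps assms(4) unfolding l_def
    by (force simp: mult.commute)
  have facts: "l \<le> K" "0 < h" "int a < int n" "int threshold \<le> int m" "1 \<le> int a" "1 \<le> int b"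
    using assms(3,5) a_pos b_pos a_in_S S_subset by (force simp: l_def K_def h_def)+
  have Nh: "N * h = int m * int a - (int j - int i) + sum_list L0 - l * int a"
    using assms(6) by (simp add: h_def l_def algebra_simps)
  have Ph: "P * h = int m * int b - l * h + (int j - int i) - sum_list L0 + l * int a"
    using Nh by (simp add: P_def h_def algebra_simps)
  have "int m \<le> int m * int a" "int m \<le> int m * int b"
    using facts by (simp_all add: mult_le_cancel_left1)
  moreover have "l * int a \<le> int n * K" "int n * l \<le> int n * K" "l * h \<le> K * h"
    using facts by (auto simp: l_def mult.commute intro: mult_mono)
  moreover have "int threshold = int n * K * h + K * h + 2 * int n * K + int n"
    by (simp add: threshold_def K_def h_def algebra_simps)
  moreover have "0 \<le> K * h" "0 \<le> int n * K" "0 \<le> l * int a"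
    by (simp_all add: K_def h_def l_def)
  ultimately have "int n * K * h \<le> N * h" "int n * K * h \<le> P * h"
    using Nh Ph sum_L0 facts assms(1,2) by linarith+
  then show "int n * int short_bound \<le> N" "int n * int short_bound \<le> int m - int (length L0) - N"
    using \<open>0 < h\<close> by (simp_all add: K_def P_def l_def)
qed

lemma steps_imp_bpow:
  assumes "i < n" "j < n" "threshold \<le> length L" "set L \<subseteq> steps" "sum_list L = int j - int i"
  shows "bpow n A (length L) i j"
proof -
  obtain L0 Q where L0: "set L0 \<subseteq> steps" "length L0 \<le> short_bound"
    and sum: "sum_list L = sum_list L0 + (int (length L) - int (length L0)) * int a + int (a + b) * Q"
    using steps_reduce assms(4) by blast
  define N where "N = - Q"
  define P where "P = int (length L) - int (length L0) - N"
  have "int j - int i = sum_list L0 + (int (length L) - int (length L0)) * int a - N * int (a + b)"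
    using sum assms(5) by (simp add: N_def)
  from padding_large[OF assms(1,2,3) L0 this]
  have "int n * int short_bound \<le> N" "int n * int short_bound \<le> P"
    unfolding P_def .
  moreover have "int (n * length L0) \<le> int n * int short_bound"
    using L0(2) by (simp add: mult_left_mono)
  ultimately have bounds: "int (n * length L0) \<le> N" "int (n * length L0) \<le> P"
    by linarith+
  then have "0 \<le> N" "0 \<le> P"
    by (meson of_nat_0_le_iff order_trans)+
  have "int j = int i + sum_list L0 + P * int a - N * int b"
    using sum assms(5) by (simp add: P_def N_def algebra_simps)
  moreover have "n * length L0 \<le> nat P" "n * length L0 \<le> nat N"
    using bounds by (metis nat_int nat_mono)+
  ultimately have "bpow n A (length L0 + nat P + nat N) i j"
    using bpow_of_steps[OF L0(1) assms(1,2)] \<open>0 \<le> P\<close> \<open>0 \<le> N\<close> by simp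
  moreover have "int (length L0 + nat P + nat N) = int (length L)"
    using \<open>0 \<le> P\<close> \<open>0 \<le> N\<close> by (simp add: P_def)
  ultimately show ?thesis by (simp only: of_nat_eq_iff)
qed

lemma bpow_iff_steps:
  assumes "i < n" "j < n" "threshold \<le> m"
  shows "bpow n A m i j \<longleftrightarrow> (\<exists>L. length L = m \<and> set L \<subseteq> steps \<and> sum_list L = int j - int i)"
  using bpow_imp_steps steps_imp_bpow assms by blast

end

theorem theorem2p10:
  fixes n :: nat and S T :: "nat set"
  assumes "S \<noteq> {}" and "T \<noteq> {}"
    and "S \<subseteq> {1..n-1}" and "T \<subseteq> {1..n-1}"
    and "Max S + Min T \<le> n" and "Min S + Max T \<le> n"
  shows "\<exists>M::nat. M > 0 \<and> (\<forall>m>M. is_toeplitz n (bpow n (toep n S T) m))"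
proof -
  interpret toeplitz_walk n S T
    using assms by unfold_locales
  have "is_toeplitz n (bpow n (toep n S T) m)" if "threshold < m" for m
    using bpow_iff_steps that unfolding is_toeplitz_def by (metis less_imp_le)
  then show ?thesis
    using threshold_pos by blast
qed

end
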